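(* Let $q$ be a prime power and $r$ odd. In any hyperbolic avsp $\{S_1,\dots,S_{q^{\frac{r+1}{2}}}\}$ of ${\rm PG}(r+1,q)$ with respect to a hyperplane $H$, any two distinct members $S_i,S_j$ meet in exactly one point, and $\Pi_i=S_i\cap H$, $\Pi_j=S_j\cap H$ meet in exactly one point. Consequently, if $r\equiv -1\pmod 4$, no hyperbolic avsp of ${\rm PG}(r+1,q)$ exists.
   Context: Affine vector space partition (avsp): given a hyperplane $H$ of ${\rm PG}(r+1,q)$, an avsp (with respect to $H$) is a set $\mathcal P$ of subspaces, none contained in $H$, such that every point of ${\rm PG}(r+1,q)\setminus H$ lies in exactly one member of $\mathcal P$. Hyperbolic avsp ($r$ odd): an avsp $\mathcal P=\{S_1,\dots,S_N\}$ of ${\rm PG}(r+1,q)$ with respect to $H$, where $N=q^{\frac{r+1}{2}}$ and every $S_i$ is a $\frac{r+1}{2}$-dimensional projective subspace, such that the sets $\Pi_i=S_i\cap H$ are $N$ generators (i.e. $\frac{r-1}{2}$-dimensional subspaces contained in the quadric) of a non-degenerate hyperbolic quadric $\mathcal Q^+(r,q)\subset H$ with: (1) each $\Pi_i$ disjoint from a fixed generator $\Pi$ of $\mathcal Q^+(r,q)$; (2) distinct $S_i,S_j$ meet in at most one point, and distinct $\Pi_i,\Pi_j$ meet in at most one point; (3) if $|\Pi_i\cap\Pi_j|=1$, then $\langle S_i,S_j\rangle\cap\mathcal Q^+(r,q)=\mathcal Q^+(r,q)$. *)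

theory Defs
  imports Complex_Main "HOL-Library.Function_Algebras"
begin

text \<open>Vectors of F_q^n are modelled as functions nat => 'a vanishing from index n on.
  PG(n-1,q) is the projective geometry of the vector space ambient n; a projective subspace
  of projective dimension k is a linear subspace of vector dimension k+1; points are
  one-dimensional linear subspaces.\<close>

definition fscale :: "'a::field \<Rightarrow> (nat \<Rightarrow> 'a) \<Rightarrow> (nat \<Rightarrow> 'a)" where
  "fscale c v = (\<lambda>i. c * v i)"

lemma vector_space_fscale: "vector_space (fscale :: 'a::field \<Rightarrow> _)"
  by unfold_locales (auto simp: fscale_def algebra_simps fun_eq_iff)

definition ambient :: "nat \<Rightarrow> (nat \<Rightarrow> 'a::field) set" where
  "ambient n = {v. \<forall>i\<ge>n. v i = 0}"

definition lsubspace :: "nat \<Rightarrow> (nat \<Rightarrow> 'a::field) set \<Rightarrow> bool" where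
  "lsubspace n U \<longleftrightarrow> U \<subseteq> ambient n \<and> module.subspace fscale U"

definition vdim :: "(nat \<Rightarrow> 'a::field) set \<Rightarrow> nat" where
  "vdim U = vector_space.dim fscale U"

definition ssum :: "(nat \<Rightarrow> 'a::field) set \<Rightarrow> (nat \<Rightarrow> 'a) set \<Rightarrow> (nat \<Rightarrow> 'a) set" where
  "ssum U W = {u + w | u w. u \<in> U \<and> w \<in> W}"

definition polar :: "((nat \<Rightarrow> 'a::field) \<Rightarrow> 'a) \<Rightarrow> (nat \<Rightarrow> 'a) \<Rightarrow> (nat \<Rightarrow> 'a) \<Rightarrow> 'a" where
  "polar Q u v = Q (u + v) - Q u - Q v"

definition quadratic_form_on :: "(nat \<Rightarrow> 'a::field) set \<Rightarrow> ((nat \<Rightarrow> 'a) \<Rightarrow> 'a) \<Rightarrow> bool" where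
  "quadratic_form_on H Q \<longleftrightarrow>
     (\<forall>c. \<forall>v\<in>H. Q (fscale c v) = c ^ 2 * Q v) \<and>
     (\<forall>u\<in>H. \<forall>w\<in>H. \<forall>v\<in>H. polar Q (u + w) v = polar Q u v + polar Q w v) \<and>
     (\<forall>c. \<forall>u\<in>H. \<forall>v\<in>H. polar Q (fscale c u) v = c * polar Q u v)"

definition nondegenerate_on :: "(nat \<Rightarrow> 'a::field) set \<Rightarrow> ((nat \<Rightarrow> 'a) \<Rightarrow> 'a) \<Rightarrow> bool" where
  "nondegenerate_on H Q \<longleftrightarrow>
     (\<forall>v\<in>H. Q v = 0 \<and> (\<forall>u\<in>H. polar Q v u = 0) \<longrightarrow> v = 0)"

definition generator :: "nat \<Rightarrow> (nat \<Rightarrow> 'a::field) set \<Rightarrow> ((nat \<Rightarrow> 'a) \<Rightarrow> 'a) \<Rightarrow> (nat \<Rightarrow> 'a) set \<Rightarrow> bool" where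
  "generator n H Q P \<longleftrightarrow> lsubspace n P \<and> P \<subseteq> H \<and> vdim P = vdim H div 2 \<and> (\<forall>v\<in>P. Q v = 0)"

text \<open>Non-degenerate hyperbolic quadric in H (H of even vector dimension): non-degenerate
  of Witt index vdim H / 2, i.e. it contains subspaces of vector dimension vdim H / 2.\<close>
definition hyperbolic_quadric :: "nat \<Rightarrow> (nat \<Rightarrow> 'a::field) set \<Rightarrow> ((nat \<Rightarrow> 'a) \<Rightarrow> 'a) \<Rightarrow> bool" where
  "hyperbolic_quadric n H Q \<longleftrightarrow> lsubspace n H \<and> even (vdim H) \<and>
     quadratic_form_on H Q \<and> nondegenerate_on H Q \<and> (\<exists>P. generator n H Q P)"

definition avsp :: "nat \<Rightarrow> (nat \<Rightarrow> 'a::field) set \<Rightarrow> nat \<Rightarrow> (nat \<Rightarrow> (nat \<Rightarrow> 'a) set) \<Rightarrow> bool" where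
  "avsp n H N S \<longleftrightarrow> lsubspace n H \<and> vdim H + 1 = n \<and> inj_on S {..<N} \<and>
     (\<forall>i<N. lsubspace n (S i) \<and> \<not> S i \<subseteq> H) \<and>
     (\<forall>p. lsubspace n p \<and> vdim p = 1 \<and> \<not> p \<subseteq> H \<longrightarrow> (\<exists>!i. i < N \<and> p \<subseteq> S i))"

definition hyperbolic_avsp :: "nat \<Rightarrow> (nat \<Rightarrow> 'a::{field,finite}) set \<Rightarrow> ((nat \<Rightarrow> 'a) \<Rightarrow> 'a)
    \<Rightarrow> (nat \<Rightarrow> 'a) set \<Rightarrow> (nat \<Rightarrow> (nat \<Rightarrow> 'a) set) \<Rightarrow> bool" where
  "hyperbolic_avsp r H Q P0 S \<longleftrightarrow>
     (let N = card (UNIV :: 'a set) ^ ((r + 1) div 2) in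
       odd r \<and> avsp (r + 2) H N S \<and>
       (\<forall>i<N. vdim (S i) = (r + 1) div 2 + 1) \<and>
       hyperbolic_quadric (r + 2) H Q \<and>
       generator (r + 2) H Q P0 \<and>
       inj_on (\<lambda>i. S i \<inter> H) {..<N} \<and>
       (\<forall>i<N. generator (r + 2) H Q (S i \<inter> H) \<and> S i \<inter> H \<inter> P0 = {0}) \<and>
       (\<forall>i<N. \<forall>j<N. i \<noteq> j \<longrightarrow> vdim (S i \<inter> S j) \<le> 1 \<and> vdim (S i \<inter> S j \<inter> H) \<le> 1) \<and>
       (\<forall>i<N. \<forall>j<N. i \<noteq> j \<and> vdim (S i \<inter> S j \<inter> H) = 1 \<longrightarrow>
           {v \<in> H. Q v = 0} \<subseteq> ssum (S i) (S j)))"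

end

(* Two members of a hyperbolic avsp are subspaces of dimension (r + 3)/2 in a space of dimension
   r + 2, so they meet nontrivially; a common vector outside H would span an affine point lying in
   two members, so the intersection lies in H, and by hypothesis it is at most a point.

   For the parity, let U, W be two of the generators S_i \<inter> H and \<Pi> the fixed generator, which is
   a common complement of U and W in H. Sending x \<in> U to the unique s x \<in> \<Pi> with x + s x \<in> W,
   the form (x, y) \<mapsto> polar Q (s x) y on U is alternating with radical U \<inter> W, a point. An
   alternating form has even rank, so (r + 1)/2 - 1 is even, i.e. r \<equiv> 1 (mod 4). *)

theory Submission
  imports Defs "HOL-Library.FuncSet"
begin

interpretation fs: vector_space "fscale :: 'a::field \<Rightarrow> (nat \<Rightarrow> 'a) \<Rightarrow> _"
  by (rule vector_space_fscale)

lemma card_field_ge_2: "2 \<le> card (UNIV :: 'a::{field,finite} set)"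
proof -
  have "card {0::'a, 1} \<le> card (UNIV :: 'a set)" by (intro card_mono) auto
  then show ?thesis by simp
qed

lemma card_span_independent:
  fixes B :: "(nat \<Rightarrow> 'a::{field,finite}) set"
  assumes "finite B" "fs.independent B"
  shows "card (fs.span B) = card (UNIV :: 'a set) ^ card B"
  using assms
proof (induction B rule: finite_induct)
  case empty
  then show ?case by simp
next
  case (insert a B)
  have indep: "fs.independent B" and a: "a \<notin> fs.span B"
    using insert.prems insert.hyps fs.independent_insert[of a B] by (auto split: if_splits)
  have "bij_betw (\<lambda>(k, x). fscale k a + x) (UNIV \<times> fs.span B) (fs.span (insert a B))"
  proof (rule bij_betwI')
    fix p p' assume "p \<in> (UNIV :: 'a set) \<times> fs.span B" "p' \<in> (UNIV :: 'a set) \<times> fs.span B"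
    moreover obtain k x k' x' where [simp]: "p = (k, x)" "p' = (k', x')" by (cases p, cases p')
    ultimately have x: "x \<in> fs.span B" and x': "x' \<in> fs.span B" by auto
    show "((\<lambda>(k, x). fscale k a + x) p = (\<lambda>(k, x). fscale k a + x) p') = (p = p')"
    proof
      assume eq: "(\<lambda>(k, x). fscale k a + x) p = (\<lambda>(k, x). fscale k a + x) p'"
      have "fscale (k - k') a = x' - x"
        using eq by (auto simp: fscale_def fun_eq_iff algebra_simps)
      then have in_span: "fscale (k - k') a \<in> fs.span B"
        using x x' by (auto intro: fs.span_diff)
      have "k = k'"
      proof (rule ccontr)
        assume "k \<noteq> k'"
        then have "fscale (inverse (k - k')) (fscale (k - k') a) = a"
          by (simp add: fscale_def fun_eq_iff)
        then show False using a fs.span_scale[OF in_span, of "inverse (k - k')"] by simp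
      qed
      then show "p = p'" using eq by (auto simp: fscale_def)
    qed simp
  next
    fix p assume "p \<in> (UNIV :: 'a set) \<times> fs.span B"
    then obtain k x where "p = (k, x)" "x \<in> fs.span (insert a B)"
      using fs.span_mono[of B "insert a B"] by auto
    moreover have "fscale k a \<in> fs.span (insert a B)" by (intro fs.span_scale fs.span_base) simp
    ultimately show "(\<lambda>(k, x). fscale k a + x) p \<in> fs.span (insert a B)"
      by (simp add: fs.span_add)
  next
    fix y assume "y \<in> fs.span (insert a B)"
    then obtain k where "y - fscale k a \<in> fs.span B" by (auto simp: fs.span_insert)
    then show "\<exists>p\<in>UNIV \<times> fs.span B. y = (\<lambda>(k, x). fscale k a + x) p"
      by (intro bexI[of _ "(k, y - fscale k a)"]) auto
  qed
  then have "card (fs.span (insert a B)) = card (UNIV :: 'a set) * card (fs.span B)"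
    by (simp add: bij_betw_same_card[symmetric] card_cartesian_product)
  then show ?case using insert indep by simp
qed

lemma card_subspace_eq_power_vdim:
  fixes U :: "(nat \<Rightarrow> 'a::{field,finite}) set"
  assumes "finite U" "fs.subspace U"
  shows "card U = card (UNIV :: 'a set) ^ vdim U"
proof -
  obtain B where B: "B \<subseteq> U" "fs.independent B" "U \<subseteq> fs.span B" "card B = fs.dim U"
    by (rule fs.basis_exists)
  have "fs.span B = U" using B assms fs.span_subspace by blast
  moreover have "finite B" using B assms finite_subset by blast
  ultimately show ?thesis using card_span_independent[of B] B by (simp add: vdim_def)
qed

lemma bij_betw_ambient_PiE:
  "bij_betw (\<lambda>v. restrict v {..<n}) (ambient n) (\<Pi>\<^sub>E i\<in>{..<n}. (UNIV :: 'a::field set))"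
proof (rule bij_betwI')
  fix x y :: "nat \<Rightarrow> 'a" assume "x \<in> ambient n" "y \<in> ambient n"
  then show "(restrict x {..<n} = restrict y {..<n}) = (x = y)"
    by (auto simp: ambient_def fun_eq_iff restrict_def) (metis not_le)
next
  fix f :: "nat \<Rightarrow> 'a" assume "f \<in> (\<Pi>\<^sub>E i\<in>{..<n}. UNIV)"
  then show "\<exists>x\<in>ambient n. f = restrict x {..<n}"
    by (intro bexI[of _ "\<lambda>i. if i < n then f i else 0"])
      (auto simp: ambient_def fun_eq_iff PiE_def extensional_def)
qed simp

lemma card_ambient: "card (ambient n :: (nat \<Rightarrow> 'a::{field,finite}) set) = card (UNIV :: 'a set) ^ n"
  using bij_betw_same_card[OF bij_betw_ambient_PiE[where 'a='a, of n]] by (simp add: card_PiE)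

lemma finite_ambient: "finite (ambient n :: (nat \<Rightarrow> 'a::{field,finite}) set)"
  using bij_betw_finite[OF bij_betw_ambient_PiE[where 'a='a, of n]] by (simp add: finite_PiE)

lemma subspace_ambient: "fs.subspace (ambient n)"
  by (auto simp: fs.subspace_def ambient_def fscale_def)

lemma lsubspaceD:
  fixes U :: "(nat \<Rightarrow> 'a::{field,finite}) set"
  assumes "lsubspace n U"
  shows "finite U" "fs.subspace U" "U \<subseteq> ambient n" "card U = card (UNIV :: 'a set) ^ vdim U"
proof -
  show U: "U \<subseteq> ambient n" "fs.subspace U" using assms by (auto simp: lsubspace_def)
  show "finite U" using U finite_ambient finite_subset by blast
  then show "card U = card (UNIV :: 'a set) ^ vdim U" by (rule card_subspace_eq_power_vdim[OF _ U(2)])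
qed

lemma lsubspace_inter: "lsubspace n U \<Longrightarrow> lsubspace n W \<Longrightarrow> lsubspace n (U \<inter> W)"
  by (auto simp: lsubspace_def fs.subspace_inter)

lemma card_ssum_mult_card_inter:
  fixes U W :: "(nat \<Rightarrow> 'a::{field,finite}) set"
  assumes "finite U" "finite W" "fs.subspace U" "fs.subspace W"
  shows "card (ssum U W) * card (U \<inter> W) = card U * card W"
proof -
  define F where "F s = {p \<in> U \<times> W. fst p + snd p = s}" for s
  have UW: "U \<times> W = (\<Union>s\<in>ssum U W. F s)" by (auto simp: F_def ssum_def) blast
  have "ssum U W = (\<lambda>(u, w). u + w) ` (U \<times> W)" by (auto simp: ssum_def image_iff)
  then have fin: "finite (ssum U W)" using assms by simp
  have "card (F s) = card (U \<inter> W)" if s: "s \<in> ssum U W" for s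
  proof -
    obtain u0 w0 where u0: "u0 \<in> U" and w0: "w0 \<in> W" and s: "s = u0 + w0"
      using s by (auto simp: ssum_def)
    have "bij_betw (\<lambda>t. (u0 + t, w0 - t)) (U \<inter> W) (F s)"
    proof (rule bij_betwI')
      fix t assume "t \<in> U \<inter> W"
      then show "(u0 + t, w0 - t) \<in> F s"
        using u0 w0 s assms by (auto simp: F_def fs.subspace_add fs.subspace_diff)
    next
      fix p assume "p \<in> F s"
      then obtain u w where p: "p = (u, w)" "u \<in> U" "w \<in> W" "u + w = s" by (auto simp: F_def)
      have "u - u0 = w0 - w" using p s by (simp add: algebra_simps)
      moreover have "u - u0 \<in> U" "w0 - w \<in> W" using p u0 w0 assms by (simp_all add: fs.subspace_diff)
      ultimately have t: "u - u0 \<in> U \<inter> W" by simp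
      have "p = (u0 + (u - u0), w0 - (u - u0))" using p \<open>u - u0 = w0 - w\<close> by (simp add: algebra_simps)
      then show "\<exists>t\<in>U \<inter> W. p = (u0 + t, w0 - t)" using t by blast
    qed auto
    then show ?thesis by (simp add: bij_betw_same_card)
  qed
  then have "card (U \<times> W) = card (ssum U W) * card (U \<inter> W)"
    unfolding UW using fin assms by (subst card_UN_disjoint) (auto simp: F_def)
  then show ?thesis by (simp add: card_cartesian_product)
qed

lemma vdim_add_le_vdim_inter:
  fixes U W :: "(nat \<Rightarrow> 'a::{field,finite}) set"
  assumes U: "lsubspace n U" and W: "lsubspace n W"
  shows "vdim U + vdim W \<le> n + vdim (U \<inter> W)"
proof -
  define q where "q = card (UNIV :: 'a set)"
  note U' = lsubspaceD[OF U] and W' = lsubspaceD[OF W]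
  have "ssum U W \<subseteq> ambient n"
    using U'(3) W'(3) subspace_ambient by (auto simp: ssum_def intro: fs.subspace_add)
  then have "card (ssum U W) \<le> q ^ n"
    using card_mono[OF finite_ambient] card_ambient unfolding q_def by metis
  moreover have "card (U \<inter> W) = q ^ vdim (U \<inter> W)"
    using U'(1,2) W'(2) by (simp add: card_subspace_eq_power_vdim fs.subspace_inter q_def)
  ultimately have "q ^ (vdim U + vdim W) \<le> q ^ (n + vdim (U \<inter> W))"
    using card_ssum_mult_card_inter[OF U'(1) W'(1) U'(2) W'(2)] U'(4) W'(4)
    by (metis mult_le_mono1 power_add q_def)
  then show ?thesis
    using card_field_ge_2[where 'a='a] unfolding q_def by (intro power_le_imp_le_exp) auto
qed

definition alternating_on ::
    "(nat \<Rightarrow> 'a::field) set \<Rightarrow> ((nat \<Rightarrow> 'a) \<Rightarrow> (nat \<Rightarrow> 'a) \<Rightarrow> 'a) \<Rightarrow> bool" where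
  "alternating_on X b \<longleftrightarrow>
     (\<forall>x\<in>X. \<forall>y\<in>X. \<forall>z\<in>X. b (x + y) z = b x z + b y z \<and> b z (x + y) = b z x + b z y) \<and>
     (\<forall>c. \<forall>x\<in>X. \<forall>z\<in>X. b (fscale c x) z = c * b x z \<and> b z (fscale c x) = c * b z x) \<and>
     (\<forall>x\<in>X. b x x = 0)"

definition radical ::
    "(nat \<Rightarrow> 'a::field) set \<Rightarrow> ((nat \<Rightarrow> 'a) \<Rightarrow> (nat \<Rightarrow> 'a) \<Rightarrow> 'a) \<Rightarrow> (nat \<Rightarrow> 'a) set" where
  "radical X b = {x\<in>X. \<forall>y\<in>X. b x y = 0}"

definition orth :: "(nat \<Rightarrow> 'a::field) set \<Rightarrow> ((nat \<Rightarrow> 'a) \<Rightarrow> (nat \<Rightarrow> 'a) \<Rightarrow> 'a)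
    \<Rightarrow> (nat \<Rightarrow> 'a) set \<Rightarrow> (nat \<Rightarrow> 'a) set" where
  "orth X b A = {x\<in>X. \<forall>a\<in>A. b a x = 0}"

lemma alternating_on_add_left:
    "alternating_on X b \<Longrightarrow> x \<in> X \<Longrightarrow> y \<in> X \<Longrightarrow> z \<in> X \<Longrightarrow> b (x + y) z = b x z + b y z"
  and alternating_on_add_right:
    "alternating_on X b \<Longrightarrow> x \<in> X \<Longrightarrow> y \<in> X \<Longrightarrow> z \<in> X \<Longrightarrow> b z (x + y) = b z x + b z y"
  and alternating_on_scale_right:
    "alternating_on X b \<Longrightarrow> x \<in> X \<Longrightarrow> z \<in> X \<Longrightarrow> b z (fscale c x) = c * b z x"
  and alternating_on_self: "alternating_on X b \<Longrightarrow> x \<in> X \<Longrightarrow> b x x = 0"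
  unfolding alternating_on_def by blast+

lemma alternating_on_zero_right: "alternating_on X b \<Longrightarrow> z \<in> X \<Longrightarrow> b z 0 = 0"
  using alternating_on_scale_right[of X b z z 0] by simp

lemma alternating_on_subset: "alternating_on X b \<Longrightarrow> Y \<subseteq> X \<Longrightarrow> alternating_on Y b"
  unfolding alternating_on_def by blast

lemma alternating_on_skew:
  assumes "alternating_on X b" "fs.subspace X" "x \<in> X" "y \<in> X"
  shows "b x y = - b y x"
proof -
  have xy: "x + y \<in> X" using assms by (simp add: fs.subspace_add)
  have "0 = b (x + y) (x + y)" using assms xy by (simp add: alternating_on_self)
  also have "\<dots> = b x x + b x y + (b y x + b y y)"
    using assms xy by (simp add: alternating_on_add_left alternating_on_add_right)
  finally show ?thesis using assms by (simp add: alternating_on_self eq_neg_iff_add_eq_0)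
qed

lemma alternating_on_lincomb_right:
  assumes "alternating_on X b" "fs.subspace X" "w \<in> X" "y \<in> X" "u \<in> X" "v \<in> X"
  shows "b w (y + fscale a u + fscale c v) = b w y + a * b w u + c * b w v"
  using assms by (simp add: fs.subspace_add fs.subspace_scale
      alternating_on_add_right alternating_on_scale_right)

lemma subspace_orth:
  assumes alt: "alternating_on X b" and X: "fs.subspace X" and A: "A \<subseteq> X"
  shows "fs.subspace (orth X b A)"
  unfolding fs.subspace_def[of "orth X b A"]
proof (intro conjI ballI allI)
  show "0 \<in> orth X b A"
    using X A alternating_on_zero_right[OF alt] by (auto simp: orth_def fs.subspace_0)
next
  fix x y assume "x \<in> orth X b A" "y \<in> orth X b A"
  then show "x + y \<in> orth X b A"
    using X A alternating_on_add_right[OF alt] by (auto simp: orth_def fs.subspace_add)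
next
  fix c x assume "x \<in> orth X b A"
  then show "fscale c x \<in> orth X b A"
    using X A alternating_on_scale_right[OF alt] by (auto simp: orth_def fs.subspace_scale)
qed

context
  fixes X :: "(nat \<Rightarrow> 'a::field) set" and b u v
  assumes alt: "alternating_on X b" and X: "fs.subspace X"
    and u: "u \<in> X" and v: "v \<in> X" and uv: "b u v = 1"
begin

lemma hyperbolic_pair_coords:
  assumes "y \<in> X"
  shows "b u (y + fscale a u + fscale c v) = b u y + c" "b v (y + fscale a u + fscale c v) = b v y - a"
  using assms alternating_on_skew[OF alt X v u]
  by (simp_all add: alternating_on_lincomb_right[OF alt X] u v uv alternating_on_self[OF alt])

lemma bij_betw_orth_hyperbolic_pair:
  "bij_betw (\<lambda>(y, a, c). y + fscale a u + fscale c v) (orth X b {u, v} \<times> UNIV \<times> UNIV) X"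
proof (rule bij_betwI')
  fix p p' assume "p \<in> orth X b {u, v} \<times> (UNIV :: 'a set) \<times> (UNIV :: 'a set)"
    and "p' \<in> orth X b {u, v} \<times> (UNIV :: 'a set) \<times> (UNIV :: 'a set)"
  moreover obtain y a c y' a' c' where [simp]: "p = (y, a, c)" "p' = (y', a', c')"
    by (cases p, cases p') auto
  ultimately have y: "y \<in> orth X b {u, v}" and y': "y' \<in> orth X b {u, v}" by auto
  show "((\<lambda>(y, a, c). y + fscale a u + fscale c v) p = (\<lambda>(y, a, c). y + fscale a u + fscale c v) p')
    = (p = p')"
  proof
    assume eq: "(\<lambda>(y, a, c). y + fscale a u + fscale c v) p = (\<lambda>(y, a, c). y + fscale a u + fscale c v) p'"
    moreover have "y \<in> X" "y' \<in> X" "b u y = 0" "b v y = 0" "b u y' = 0" "b v y' = 0"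
      using y y' by (auto simp: orth_def)
    ultimately have "c = c'" "a = a'"
      using hyperbolic_pair_coords[of y a c] hyperbolic_pair_coords[of y' a' c'] by auto
    then show "p = p'" using eq by simp
  qed simp
next
  fix p assume "p \<in> orth X b {u, v} \<times> (UNIV :: 'a set) \<times> (UNIV :: 'a set)"
  then show "(\<lambda>(y, a, c). y + fscale a u + fscale c v) p \<in> X"
    using X u v by (auto simp: orth_def fs.subspace_add fs.subspace_scale)
next
  fix x assume x: "x \<in> X"
  define a where "a = - b v x"
  define c where "c = b u x"
  define y where "y = x - fscale a u - fscale c v"
  have yX: "y \<in> X" using x u v X by (simp add: y_def fs.subspace_diff fs.subspace_scale)
  have x_eq: "x = y + fscale a u + fscale c v" by (simp add: y_def)
  have "b u y = 0" "b v y = 0"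
    using hyperbolic_pair_coords[OF yX, of a c] unfolding x_eq[symmetric] by (simp_all add: a_def c_def)
  then show "\<exists>p\<in>orth X b {u, v} \<times> UNIV \<times> UNIV. x = (\<lambda>(y, a, c). y + fscale a u + fscale c v) p"
    using yX x_eq by (intro bexI[of _ "(y, a, c)"]) (auto simp: orth_def)
qed

lemma radical_orth_hyperbolic_pair: "radical (orth X b {u, v}) b = radical X b"
proof
  show "radical X b \<subseteq> radical (orth X b {u, v}) b"
  proof
    fix x assume "x \<in> radical X b"
    then have "x \<in> X" "\<forall>y\<in>X. b x y = 0" by (auto simp: radical_def)
    moreover have "b u x = 0" "b v x = 0"
      using calculation alternating_on_skew[OF alt X u, of x] alternating_on_skew[OF alt X v, of x] u v
      by auto
    ultimately show "x \<in> radical (orth X b {u, v}) b" by (auto simp: radical_def orth_def)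
  qed
next
  show "radical (orth X b {u, v}) b \<subseteq> radical X b"
  proof
    fix x assume x: "x \<in> radical (orth X b {u, v}) b"
    then have xX: "x \<in> X" and x_orth: "\<forall>y\<in>orth X b {u, v}. b x y = 0"
      and "b u x = 0" "b v x = 0" by (auto simp: radical_def orth_def)
    then have "b x u = 0" "b x v = 0"
      using alternating_on_skew[OF alt X xX u] alternating_on_skew[OF alt X xX v] by auto
    have "b x z = 0" if z: "z \<in> X" for z
    proof -
      obtain y a c where y: "y \<in> orth X b {u, v}" and z_eq: "z = y + fscale a u + fscale c v"
        using bij_betw_imp_surj_on[OF bij_betw_orth_hyperbolic_pair] z by force
      have "y \<in> X" using y by (simp add: orth_def)
      then show ?thesis using x_orth y \<open>b x u = 0\<close> \<open>b x v = 0\<close>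
        by (simp add: z_eq alternating_on_lincomb_right[OF alt X xX] u v)
    qed
    then show "x \<in> radical X b" using xX by (simp add: radical_def)
  qed
qed

end

lemma alternating_radical_even_codim:
  fixes X :: "(nat \<Rightarrow> 'a::{field,finite}) set"
  assumes "finite X" "fs.subspace X" "alternating_on X b"
  shows "\<exists>k. card X = card (radical X b) * card (UNIV :: 'a set) ^ (2 * k)"
  using assms
proof (induction "card X" arbitrary: X rule: less_induct)
  case less
  note alt = less.prems(3) and X = less.prems(2)
  show ?case
  proof (cases "radical X b = X")
    case True
    then show ?thesis by (intro exI[of _ 0]) simp
  next
    case False
    then obtain u v0 where u: "u \<in> X" and v0: "v0 \<in> X" and "b u v0 \<noteq> 0"
      unfolding radical_def by auto
    define v where "v = fscale (inverse (b u v0)) v0"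
    have v: "v \<in> X" using v0 X by (simp add: v_def fs.subspace_scale)
    have uv: "b u v = 1"
      using alternating_on_scale_right[OF alt v0 u] \<open>b u v0 \<noteq> 0\<close> by (simp add: v_def)
    let ?X' = "orth X b {u, v}"
    have "b v u \<noteq> 0" using alternating_on_skew[OF alt X v u] uv by simp
    then have "?X' \<subset> X" using u by (auto simp: orth_def)
    then have "card ?X' < card X" "finite ?X'"
      using less.prems(1) by (auto intro: psubset_card_mono finite_subset)
    moreover have "fs.subspace ?X'" using subspace_orth[OF alt X] u v by simp
    moreover have "alternating_on ?X' b" by (rule alternating_on_subset[OF alt]) (auto simp: orth_def)
    ultimately obtain k where k: "card ?X' = card (radical ?X' b) * card (UNIV :: 'a set) ^ (2 * k)"
      using less.hyps by blast
    have "card X = card ?X' * (card (UNIV :: 'a set) * card (UNIV :: 'a set))"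
      using bij_betw_same_card[OF bij_betw_orth_hyperbolic_pair[OF alt X u v uv]]
      by (simp only: card_cartesian_product)
    then have "card X = card (radical X b) * card (UNIV :: 'a set) ^ (2 * Suc k)"
      using k radical_orth_hyperbolic_pair[OF alt X u v uv] by (simp add: power_add mult_2)
    then show ?thesis ..
  qed
qed

lemma polar_commute: "polar Q u v = polar Q v u"
  by (simp add: polar_def algebra_simps)

lemma quadratic_form_on_zero:
  assumes "quadratic_form_on H Q" "0 \<in> H"
  shows "Q 0 = 0"
proof -
  have "fscale 0 (0 :: nat \<Rightarrow> 'a) = 0" by (simp add: fscale_def zero_fun_def)
  then show ?thesis using assms unfolding quadratic_form_on_def by (metis mult_zero_left zero_power2)
qed

lemma polar_totally_singular:
  assumes "fs.subspace T" "\<forall>t\<in>T. Q t = 0" "x \<in> T" "y \<in> T"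
  shows "polar Q x y = 0"
  using assms by (simp add: polar_def fs.subspace_add)

lemma ssum_eq_of_card:
  fixes X V H :: "(nat \<Rightarrow> 'a::{field,finite}) set"
  assumes "finite H" "fs.subspace H" "fs.subspace X" "fs.subspace V" "X \<subseteq> H" "V \<subseteq> H"
    and "X \<inter> V = {0}" "card X * card V = card H"
  shows "ssum X V = H"
proof -
  have "finite X" "finite V" using assms(1,5,6) finite_subset by auto
  then have "card (ssum X V) = card H"
    using card_ssum_mult_card_inter[of X V] assms(3,4,7,8) by simp
  moreover have "ssum X V \<subseteq> H" using assms(2,5,6) by (auto simp: ssum_def intro!: fs.subspace_add)
  ultimately show ?thesis using assms(1) by (simp add: card_subset_eq)
qed

text \<open>For \<open>x \<in> W \<oplus> V\<close> this is minus the \<open>V\<close>-component of \<open>x\<close>; outside \<open>ssum W V\<close>, or if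
  \<open>W \<inter> V \<noteq> {0}\<close>, the description is improper and the value is junk.\<close>

definition shift_into ::
    "(nat \<Rightarrow> 'a::field) set \<Rightarrow> (nat \<Rightarrow> 'a) set \<Rightarrow> (nat \<Rightarrow> 'a) \<Rightarrow> (nat \<Rightarrow> 'a)" where
  "shift_into W V x = (THE v. v \<in> V \<and> x + v \<in> W)"

context
  fixes V W :: "(nat \<Rightarrow> 'a::field) set"
  assumes V: "fs.subspace V" and W: "fs.subspace W" and WV: "W \<inter> V = {0}"
begin

lemma shift_into_unique:
  assumes "v1 \<in> V" "x + v1 \<in> W" "v2 \<in> V" "x + v2 \<in> W"
  shows "v1 = v2"
proof -
  have "v1 - v2 = (x + v1) - (x + v2)" by simp
  then have "v1 - v2 \<in> W \<inter> V" using assms V W by (metis IntI fs.subspace_diff)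
  then show ?thesis using WV by simp
qed

lemma shift_into:
  assumes "x \<in> ssum W V"
  shows "shift_into W V x \<in> V" "x + shift_into W V x \<in> W"
proof -
  obtain w v where "x = w + v" "w \<in> W" "v \<in> V" using assms by (auto simp: ssum_def)
  then have "\<exists>v. v \<in> V \<and> x + v \<in> W"
    using V by (intro exI[of _ "- v"]) (auto simp: fs.subspace_neg)
  then have "\<exists>!v. v \<in> V \<and> x + v \<in> W" using shift_into_unique by blast
  then have "shift_into W V x \<in> V \<and> x + shift_into W V x \<in> W"
    unfolding shift_into_def by (rule theI')
  then show "shift_into W V x \<in> V" "x + shift_into W V x \<in> W" by auto
qed

lemma shift_into_eq: "v \<in> V \<Longrightarrow> x + v \<in> W \<Longrightarrow> shift_into W V x = v"
  unfolding shift_into_def using shift_into_unique by blast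

lemma shift_into_add:
  assumes "x \<in> ssum W V" "y \<in> ssum W V"
  shows "shift_into W V (x + y) = shift_into W V x + shift_into W V y"
proof (rule shift_into_eq)
  show "shift_into W V x + shift_into W V y \<in> V"
    using shift_into assms V by (simp add: fs.subspace_add)
  have "(x + shift_into W V x) + (y + shift_into W V y) \<in> W"
    using shift_into assms W by (simp add: fs.subspace_add)
  then show "x + y + (shift_into W V x + shift_into W V y) \<in> W" by (simp add: algebra_simps)
qed

lemma shift_into_scale:
  assumes "x \<in> ssum W V"
  shows "shift_into W V (fscale c x) = fscale c (shift_into W V x)"
proof (rule shift_into_eq)
  show "fscale c (shift_into W V x) \<in> V"
    using shift_into assms V by (simp add: fs.subspace_scale)
  have "fscale c (x + shift_into W V x) \<in> W"
    using shift_into assms W by (simp add: fs.subspace_scale)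
  then show "fscale c x + fscale c (shift_into W V x) \<in> W" by (simp add: fs.scale_right_distrib)
qed

end

lemma quadratic_form_on_polar_add_left:
  "quadratic_form_on H Q \<Longrightarrow> x \<in> H \<Longrightarrow> y \<in> H \<Longrightarrow> z \<in> H \<Longrightarrow> polar Q (x + y) z = polar Q x z + polar Q y z"
  and quadratic_form_on_polar_scale_left:
  "quadratic_form_on H Q \<Longrightarrow> x \<in> H \<Longrightarrow> z \<in> H \<Longrightarrow> polar Q (fscale c x) z = c * polar Q x z"
  by (simp_all add: quadratic_form_on_def)

lemma subset_ssum_right: "fs.subspace W \<Longrightarrow> V \<subseteq> ssum W V"
  unfolding ssum_def using fs.subspace_0 by force

context
  fixes H U V W :: "(nat \<Rightarrow> 'a::field) set" and Q :: "(nat \<Rightarrow> 'a) \<Rightarrow> 'a"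
  assumes qf: "quadratic_form_on H Q" and UH: "U \<subseteq> H" and QV: "\<forall>x\<in>V. Q x = 0"
    and V: "fs.subspace V" and W: "fs.subspace W" and WV: "W \<inter> V = {0}" and HWV: "ssum W V = H"
begin

lemma alternating_on_polar_shift_into:
  assumes QU: "\<forall>x\<in>U. Q x = 0" and QW: "\<forall>x\<in>W. Q x = 0"
  shows "alternating_on U (\<lambda>x y. polar Q (shift_into W V x) y)"
  unfolding alternating_on_def
proof (intro conjI ballI allI)
  have shift_H: "shift_into W V x \<in> H" if "x \<in> H" for x
    using that shift_into(1)[OF V W WV] subset_ssum_right[OF W] HWV by auto
  note polar_rules = quadratic_form_on_polar_add_left[OF qf] quadratic_form_on_polar_scale_left[OF qf]
  {
    fix x y z assume "x \<in> U" "y \<in> U" "z \<in> U"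
    then have H: "x \<in> H" "y \<in> H" "z \<in> H" using UH by auto
    then show "polar Q (shift_into W V (x + y)) z = polar Q (shift_into W V x) z + polar Q (shift_into W V y) z"
      using HWV by (simp add: shift_into_add[OF V W WV] polar_rules shift_H)
    show "polar Q (shift_into W V z) (x + y) = polar Q (shift_into W V z) x + polar Q (shift_into W V z) y"
      using H by (simp add: polar_commute[of Q "shift_into W V z"] polar_rules shift_H)
  next
    fix c x z assume "x \<in> U" "z \<in> U"
    then have H: "x \<in> H" "z \<in> H" using UH by auto
    then show "polar Q (shift_into W V (fscale c x)) z = c * polar Q (shift_into W V x) z"
      using HWV by (simp add: shift_into_scale[OF V W WV] polar_rules shift_H)
    show "polar Q (shift_into W V z) (fscale c x) = c * polar Q (shift_into W V z) x"
      using H by (simp add: polar_commute[of Q "shift_into W V z"] polar_rules shift_H)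
  }
next
  fix x assume x: "x \<in> U"
  \<comment> \<open>\<open>polar Q s x = Q (x + s) - Q s - Q x\<close> with \<open>x + s \<in> W\<close>, \<open>s \<in> V\<close>, \<open>x \<in> U\<close>,
    all totally singular\<close>
  have "x + shift_into W V x \<in> W" "shift_into W V x \<in> V"
    using shift_into[OF V W WV] x UH HWV by auto
  then show "polar Q (shift_into W V x) x = 0"
    using x QU QV QW by (simp add: polar_def add.commute)
qed

lemma radical_polar_shift_into:
  assumes nd: "nondegenerate_on H Q" and HUV: "ssum U V = H"
  shows "radical U (\<lambda>x y. polar Q (shift_into W V x) y) = U \<inter> W"
proof
  have VH: "V \<subseteq> H" using subset_ssum_right[OF W, of V] HWV by simp
  have "Q 0 = 0" using quadratic_form_on_zero[OF qf] VH fs.subspace_0[OF V] by blast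
  moreover have "shift_into W V x = 0" if "x \<in> W" for x
    using that V by (intro shift_into_eq[OF V W WV]) (auto simp: fs.subspace_0)
  ultimately show "U \<inter> W \<subseteq> radical U (\<lambda>x y. polar Q (shift_into W V x) y)"
    by (auto simp: radical_def polar_def)
  show "radical U (\<lambda>x y. polar Q (shift_into W V x) y) \<subseteq> U \<inter> W"
  proof
    fix x assume "x \<in> radical U (\<lambda>x y. polar Q (shift_into W V x) y)"
    then have x: "x \<in> U" and rad: "\<forall>y\<in>U. polar Q (shift_into W V x) y = 0"
      by (auto simp: radical_def)
    have "x \<in> ssum W V" using x UH HWV by auto
    note sx = shift_into[OF V W WV this]
    have sxH: "shift_into W V x \<in> H" using sx(1) VH by auto
    \<comment> \<open>the shift vector is orthogonal to \<open>U\<close> by assumption and to \<open>V\<close> since it lies in \<open>V\<close>\<close>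
    have "polar Q (shift_into W V x) h = 0" if hH: "h \<in> H" for h
    proof -
      obtain u v where h: "h = u + v" and u: "u \<in> U" and v: "v \<in> V"
        using hH HUV by (auto simp: ssum_def)
      have "polar Q h (shift_into W V x) = polar Q u (shift_into W V x) + polar Q v (shift_into W V x)"
        using h u v UH VH sxH by (simp add: quadratic_form_on_polar_add_left[OF qf] subsetD)
      also have "\<dots> = 0"
        using rad u polar_totally_singular[OF V QV v sx(1)] by (simp add: polar_commute[of Q u])
      finally show ?thesis by (simp add: polar_commute)
    qed
    then have "shift_into W V x = 0" using nd sx(1) sxH QV by (simp add: nondegenerate_on_def)
    then show "x \<in> U \<inter> W" using sx(2) x by simp
  qed
qed

end

lemma generators_inter_even_codim:
  fixes H U V W :: "(nat \<Rightarrow> 'a::{field,finite}) set"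
  assumes quadric: "hyperbolic_quadric n H Q"
    and U: "generator n H Q U" and V: "generator n H Q V" and W: "generator n H Q W"
    and UV: "U \<inter> V = {0}" and WV: "W \<inter> V = {0}"
  shows "\<exists>k. card U = card (U \<inter> W) * card (UNIV :: 'a set) ^ (2 * k)"
proof -
  have H: "lsubspace n H" "even (vdim H)" and qf: "quadratic_form_on H Q" and nd: "nondegenerate_on H Q"
    using quadric by (auto simp: hyperbolic_quadric_def)
  have gen: "finite X \<and> fs.subspace X \<and> X \<subseteq> H \<and> (\<forall>x\<in>X. Q x = 0) \<and> card X * card V = card H"
    if "generator n H Q X" for X
    using that V lsubspaceD[of n X] lsubspaceD[of n V] lsubspaceD(4)[OF H(1)] H(2)
    by (auto simp: generator_def power_add[symmetric] mult_2 elim!: evenE)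
  have "ssum X V = H" if "generator n H Q X" "X \<inter> V = {0}" for X
    by (rule ssum_eq_of_card) (use that gen[OF that(1)] gen[OF V] lsubspaceD[OF H(1)] in auto)
  then have "ssum U V = H" "ssum W V = H" using U W UV WV by auto
  then show ?thesis
    using alternating_radical_even_codim[OF _ _
        alternating_on_polar_shift_into[OF qf _ _ _ _ _ \<open>ssum W V = H\<close>]]
      radical_polar_shift_into[OF qf _ _ _ _ _ \<open>ssum W V = H\<close> nd \<open>ssum U V = H\<close>]
      gen[OF U] gen[OF V] gen[OF W] WV by metis
qed

lemma avsp_inter_subset_hyperplane:
  fixes S :: "nat \<Rightarrow> (nat \<Rightarrow> 'a::field) set"
  assumes avsp: "avsp n H N S" and "i < N" "j < N" "i \<noteq> j"
  shows "S i \<inter> S j \<subseteq> H"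
proof
  fix v assume v: "v \<in> S i \<inter> S j"
  have Si: "lsubspace n (S i)" and Sj: "lsubspace n (S j)" and H: "lsubspace n H"
    and unique: "\<And>p. lsubspace n p \<Longrightarrow> vdim p = 1 \<Longrightarrow> \<not> p \<subseteq> H \<Longrightarrow> \<exists>!k. k < N \<and> p \<subseteq> S k"
    using avsp \<open>i < N\<close> \<open>j < N\<close> by (auto simp: avsp_def)
  show "v \<in> H"
  proof (rule ccontr)
    assume "v \<notin> H"
    then have "v \<noteq> 0" using H fs.subspace_0 by (auto simp: lsubspace_def)
    let ?p = "fs.span {v}"
    have "?p \<subseteq> ambient n"
      using v Si subspace_ambient by (intro fs.span_minimal) (auto simp: lsubspace_def)
    then have "lsubspace n ?p" by (simp add: lsubspace_def)
    moreover have "vdim ?p = 1" using \<open>v \<noteq> 0\<close>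
      by (simp add: vdim_def fs.dim_span_eq_card_independent del: fs.dim_span)
    moreover have "\<not> ?p \<subseteq> H" using \<open>v \<notin> H\<close> fs.span_base[of v "{v}"] by auto
    moreover have "?p \<subseteq> S i" "?p \<subseteq> S j"
      using v Si Sj fs.span_minimal[of "{v}" "S i"] fs.span_minimal[of "{v}" "S j"]
      by (auto simp: lsubspace_def)
    ultimately show False using unique \<open>i < N\<close> \<open>j < N\<close> \<open>i \<noteq> j\<close> by blast
  qed
qed

lemma hyperbolic_avsp_members_meet_in_point:
  fixes S :: "nat \<Rightarrow> (nat \<Rightarrow> 'a::{field,finite}) set"
  assumes hyp: "hyperbolic_avsp r H Q P0 S"
    and N: "N = card (UNIV :: 'a set) ^ ((r + 1) div 2)" and ij: "i < N" "j < N" "i \<noteq> j"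
  shows "vdim (S i \<inter> S j) = 1 \<and> vdim (S i \<inter> S j \<inter> H) = 1"
proof -
  have avsp: "avsp (r + 2) H N S" and "odd r"
    and dim: "\<forall>i<N. vdim (S i) = (r + 1) div 2 + 1"
    and le1: "vdim (S i \<inter> S j) \<le> 1"
    using hyp ij unfolding hyperbolic_avsp_def Let_def N by auto
  have "vdim (S i) + vdim (S j) \<le> r + 2 + vdim (S i \<inter> S j)"
    using avsp ij by (intro vdim_add_le_vdim_inter) (auto simp: avsp_def)
  then have "vdim (S i \<inter> S j) = 1" using dim ij le1 \<open>odd r\<close> by fastforce
  moreover have "S i \<inter> S j \<inter> H = S i \<inter> S j"
    using avsp_inter_subset_hyperplane[OF avsp ij] by blast
  ultimately show ?thesis by simp
qed

lemma hyperbolic_avsp_mod_4_eq_1: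
  fixes S :: "nat \<Rightarrow> (nat \<Rightarrow> 'a::{field,finite}) set"
  assumes hyp: "hyperbolic_avsp r H Q P0 S"
  shows "r mod 4 = 1"
proof -
  define q where "q = card (UNIV :: 'a set)"
  define m where "m = (r + 1) div 2"
  have "odd r" and avsp: "avsp (r + 2) H (q ^ m) S" and quadric: "hyperbolic_quadric (r + 2) H Q"
    and P0: "generator (r + 2) H Q P0"
    and gens: "\<forall>i<q ^ m. generator (r + 2) H Q (S i \<inter> H) \<and> S i \<inter> H \<inter> P0 = {0}"
    using hyp unfolding hyperbolic_avsp_def Let_def m_def q_def by auto
  have "1 < q" using card_field_ge_2[where 'a='a] by (simp add: q_def)
  have r: "r + 1 = 2 * m" "0 < m" using \<open>odd r\<close> by (auto simp: m_def)
  have "1 < q ^ m" using \<open>1 < q\<close> r(2) by (rule one_less_power)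
  then have "0 < q ^ m" by linarith
  have U: "generator (r + 2) H Q (S 0 \<inter> H)" "S 0 \<inter> H \<inter> P0 = {0}"
    and W: "generator (r + 2) H Q (S 1 \<inter> H)" "S 1 \<inter> H \<inter> P0 = {0}"
    using gens \<open>0 < q ^ m\<close> \<open>1 < q ^ m\<close> by blast+
  obtain k where k: "card (S 0 \<inter> H) = card (S 0 \<inter> H \<inter> (S 1 \<inter> H)) * q ^ (2 * k)"
    using generators_inter_even_codim[OF quadric U(1) P0 W(1) U(2) W(2)] unfolding q_def by blast
  have "vdim (S 0 \<inter> S 1 \<inter> H) = 1"
    using hyperbolic_avsp_members_meet_in_point[OF hyp refl, of 0 1] \<open>0 < q ^ m\<close> \<open>1 < q ^ m\<close>
    unfolding q_def m_def by simp
  moreover have "lsubspace (r + 2) (S 0 \<inter> H \<inter> (S 1 \<inter> H))"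
    using U(1) W(1) by (simp add: generator_def lsubspace_inter)
  moreover have "S 0 \<inter> H \<inter> (S 1 \<inter> H) = S 0 \<inter> S 1 \<inter> H" by blast
  ultimately have "card (S 0 \<inter> H \<inter> (S 1 \<inter> H)) = q"
    using lsubspaceD(4) by (metis power_one_right q_def)
  moreover have "card (S 0 \<inter> H) = q ^ m"
    using U(1) avsp r lsubspaceD(4)[of "r + 2" "S 0 \<inter> H"] by (simp add: generator_def avsp_def q_def)
  ultimately have "q ^ m = q ^ (2 * k + 1)" using k by simp
  then have "m = 2 * k + 1" using \<open>1 < q\<close> power_inject_exp by blast
  then show ?thesis using r by presburger
qed

theorem mainTheorem6:
  fixes H P0 :: "(nat \<Rightarrow> 'a::{field,finite}) set"
    and Q :: "(nat \<Rightarrow> 'a) \<Rightarrow> 'a"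
    and S :: "nat \<Rightarrow> (nat \<Rightarrow> 'a) set"
    and r :: nat
  assumes "odd r"
    and "hyperbolic_avsp r H Q P0 S"
  shows "(\<forall>i < card (UNIV :: 'a set) ^ ((r + 1) div 2). \<forall>j < card (UNIV :: 'a set) ^ ((r + 1) div 2). i \<noteq> j \<longrightarrow>
            vdim (S i \<inter> S j) = 1 \<and> vdim (S i \<inter> S j \<inter> H) = 1)
         \<and> r mod 4 \<noteq> 3"
  using hyperbolic_avsp_members_meet_in_point[OF assms(2) refl] hyperbolic_avsp_mod_4_eq_1[OF assms(2)] by simp

end
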